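(* Let $f_{N_2G}(x)=\left(\frac{\sqrt x+1}{2}\right)\sqrt{\frac{x+1}{2}}-\sqrt x$ for $x\in(0,\infty)$, let $f_{N_2G}^*(u)=u\,f_{N_2G}\!\left(\frac{1-u}{u}\right)$ for $u\in(0,1)$, extended by continuity to $[0,1]$ (explicitly $f_{N_2G}^*(u)=\frac{\sqrt2}{4}\left(\sqrt u+\sqrt{1-u}\right)-\sqrt{u(1-u)}$), and define $\overline M_{N_2G}(C_1,C_2)=E_X\{f_{N_2G}^*(P(C_2\mid x))\}$. Then $$P_e\le \frac12\left[1-\frac{4}{\sqrt2}\,\overline M_{N_2G}(C_1,C_2)\right].$$
   Context: Two-class decision problem: classes $C_1,C_2$, an observation $x$ in a space $\mathrm X$ with density $p(x)$, and a posteriori probabilities $P(C_1\mid x),P(C_2\mid x)\ge0$ with $P(C_1\mid x)+P(C_2\mid x)=1$. $E_X\{g(x)\}=\int_{\mathrm X} g(x)p(x)\,dx$. $P_e=E_X\{\min(P(C_1\mid x),P(C_2\mid x))\}$ is the Bayesian probability of error. *)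

theory Defs
  imports "HOL-Analysis.Analysis"
begin

definition E_X :: "'a measure \<Rightarrow> ('a \<Rightarrow> real) \<Rightarrow> ('a \<Rightarrow> real) \<Rightarrow> real" where
  "E_X M p g = (\<integral>x. g x * p x \<partial>M)"

definition Pe :: "'a measure \<Rightarrow> ('a \<Rightarrow> real) \<Rightarrow> ('a \<Rightarrow> real) \<Rightarrow> ('a \<Rightarrow> real) \<Rightarrow> real" where
  "Pe M p P1 P2 = E_X M p (\<lambda>x. min (P1 x) (P2 x))"

definition fN2G :: "real \<Rightarrow> real" where
  "fN2G x = ((sqrt x + 1) / 2) * sqrt ((x + 1) / 2) - sqrt x"

definition fN2G_star :: "real \<Rightarrow> real" where
  "fN2G_star u =
     (if 0 < u \<and> u < 1 then u * fN2G ((1 - u) / u)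
      else if u = 0 then Lim (at_right 0) (\<lambda>v. v * fN2G ((1 - v) / v))
      else if u = 1 then Lim (at_left 1) (\<lambda>v. v * fN2G ((1 - v) / v))
      else 0)"

definition M_N2G :: "'a measure \<Rightarrow> ('a \<Rightarrow> real) \<Rightarrow> ('a \<Rightarrow> real) \<Rightarrow> real" where
  "M_N2G M p P2 = E_X M p (\<lambda>x. fN2G_star (P2 x))"

end

theory Submission
  imports Defs
begin

text \<open>With \<open>a = sqrt (P(C\<^sub>1|x))\<close> and \<open>b = sqrt (P(C\<^sub>2|x))\<close> one has \<open>a\<^sup>2 + b\<^sup>2 = 1\<close>, and the
  elementary inequality \<open>2 min(a\<^sup>2, b\<^sup>2) \<le> 1 - (a + b) + 2 sqrt 2 a b\<close> is exactly the pointwise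
  bound \<open>min(P(C\<^sub>1|x), P(C\<^sub>2|x)) \<le> 1/2 (1 - 4/sqrt 2 f\<^sup>*(P(C\<^sub>2|x)))\<close>.\<close>

definition fN2G_star_closed :: "real \<Rightarrow> real" where
  "fN2G_star_closed u = sqrt 2 / 4 * (sqrt u + sqrt (1 - u)) - sqrt u * sqrt (1 - u)"

lemma continuous_on_fN2G_star_closed: "continuous_on A fN2G_star_closed"
  unfolding fN2G_star_closed_def by (intro continuous_intros)

lemma fN2G_perspective_eq:
  assumes "0 < u" "u < 1"
  shows "u * fN2G ((1 - u) / u) = fN2G_star_closed u"
proof -
  have su: "sqrt u > 0" and uu: "u = sqrt u * sqrt u" using assms by simp_all
  have field_identity: "(q * q) * ((c / q + 1) / 2 * (1 / (r * q)) - c / q) = (c + q) / (2 * r) - q * c"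
    if "q > 0" "r > 0" for q c r :: real
    using that by (simp add: field_simps)
  have "sqrt (((1 - u) / u + 1) / 2) = 1 / (sqrt 2 * sqrt u)"
    using assms by (simp add: field_simps real_sqrt_divide real_sqrt_mult)
  then have "u * fN2G ((1 - u) / u)
      = u * ((sqrt (1 - u) / sqrt u + 1) / 2 * (1 / (sqrt 2 * sqrt u)) - sqrt (1 - u) / sqrt u)"
    by (simp add: fN2G_def real_sqrt_divide)
  also have "\<dots> = (sqrt (1 - u) + sqrt u) / (2 * sqrt 2) - sqrt u * sqrt (1 - u)"
    using field_identity[OF su, of "sqrt 2" "sqrt (1 - u)"] uu by simp
  also have "\<dots> = fN2G_star_closed u"
    by (simp add: fN2G_star_closed_def field_simps)
  finally show ?thesis .
qed

lemma fN2G_star_eq_closed: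
  assumes "0 \<le> u" "u \<le> 1"
  shows "fN2G_star u = fN2G_star_closed u"
proof -
  have lim: "((\<lambda>v. v * fN2G ((1 - v) / v)) \<longlongrightarrow> fN2G_star_closed a) F"
    if "F \<le> at a" "\<forall>\<^sub>F v in F. 0 < v \<and> v < 1" for a :: real and F
  proof -
    have "(fN2G_star_closed \<longlongrightarrow> fN2G_star_closed a) F"
      using continuous_on_fN2G_star_closed[of UNIV] that(1)
      by (metis UNIV_I continuous_on_def at_within_open open_UNIV tendsto_mono)
    moreover have "\<forall>\<^sub>F v in F. v * fN2G ((1 - v) / v) = fN2G_star_closed v"
      using that(2) by eventually_elim (simp add: fN2G_perspective_eq)
    ultimately show ?thesis by (simp add: tendsto_cong)
  qed
  have "((\<lambda>v. v * fN2G ((1 - v) / v)) \<longlongrightarrow> fN2G_star_closed 0) (at_right 0)"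
    using eventually_at_right_real[of 0 1] by (intro lim) (simp_all add: at_le)
  moreover have "((\<lambda>v. v * fN2G ((1 - v) / v)) \<longlongrightarrow> fN2G_star_closed 1) (at_left 1)"
    using eventually_at_left_real[of 0 1] by (intro lim) (simp_all add: at_le)
  ultimately show ?thesis
    using assms by (auto simp: fN2G_star_def fN2G_perspective_eq tendsto_Lim)
qed

text \<open>With \<open>s = a + b\<close> and \<open>d = b - a\<close> the difference of the two sides factors as
  \<open>(1 - d) (sqrt 2 (1 + d) - s)\<close>; both factors are nonnegative because \<open>s\<^sup>2 + d\<^sup>2 = 2\<close> and \<open>s \<ge> 1\<close>.\<close>
lemma sq_le_of_sum_sq_eq_one:
  fixes a b :: real
  assumes "0 \<le> a" "a \<le> b" "a\<^sup>2 + b\<^sup>2 = 1"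
  shows "2 * a\<^sup>2 \<le> 1 - (a + b) + 2 * sqrt 2 * a * b"
proof -
  define s d where "s = a + b" and "d = b - a"
  have sd: "s\<^sup>2 + d\<^sup>2 = 2" and s_sq: "s\<^sup>2 = 1 + 2 * a * b"
    using assms(3) by (simp_all add: s_def d_def power2_eq_square algebra_simps)
  have "s \<ge> 0" "d \<ge> 0" using assms by (simp_all add: s_def d_def)
  have "1 \<le> s\<^sup>2" using s_sq assms by simp
  then have "d\<^sup>2 \<le> 1\<^sup>2" using sd by simp
  then have d_le: "d \<le> 1" by (rule power2_le_imp_le) simp
  have "s\<^sup>2 \<le> 2" using sd zero_le_power2[of d] by linarith
  then have s_le: "s \<le> sqrt 2" by (rule real_le_rsqrt)
  have one_minus_d_sq: "1 - d\<^sup>2 = 2 * a * b"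
    using assms(3) by (simp add: d_def power2_eq_square algebra_simps)
  have "1 - (a + b) + 2 * sqrt 2 * a * b - 2 * a\<^sup>2 = sqrt 2 * (2 * a * b) - s + d * s"
    using assms(3) by (simp add: s_def d_def power2_eq_square algebra_simps)
  also have "\<dots> = (1 - d) * (sqrt 2 * (1 + d) - s)"
    unfolding one_minus_d_sq[symmetric] by (simp add: power2_eq_square algebra_simps)
  also have "\<dots> \<ge> 0"
  proof -
    have "s \<le> sqrt 2 * (1 + d)"
      using s_le \<open>d \<ge> 0\<close> by (simp add: distrib_left add_increasing2)
    then show ?thesis using d_le by simp
  qed
  finally show ?thesis by simp
qed

lemma min_le_fN2G_star_closed_bound:
  assumes "0 \<le> u" "u \<le> 1"
  shows "min (1 - u) u \<le> 1/2 * (1 - 4 / sqrt 2 * fN2G_star_closed u)"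
proof -
  define a b where "a = sqrt u" and "b = sqrt (1 - u)"
  have sq: "a\<^sup>2 = u" "b\<^sup>2 = 1 - u" and nonneg: "0 \<le> a" "0 \<le> b"
    using assms by (simp_all add: a_def b_def)
  have "4 / sqrt 2 = 2 * sqrt 2" by (simp add: field_simps)
  then have rhs: "1/2 * (1 - 4 / sqrt 2 * fN2G_star_closed u)
      = 1/2 * (1 - (a + b) + 2 * sqrt 2 * a * b)"
    by (simp add: fN2G_star_closed_def a_def[symmetric] b_def[symmetric] algebra_simps)
  show ?thesis
    unfolding rhs
  proof (cases "a \<le> b")
    case True
    then have "u \<le> 1 - u" using power_mono[OF True nonneg(1), of 2] sq by simp
    then show "min (1 - u) u \<le> 1/2 * (1 - (a + b) + 2 * sqrt 2 * a * b)"
      using sq_le_of_sum_sq_eq_one[OF nonneg(1) True] sq by simp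
  next
    case False
    then have "1 - u \<le> u" using power_mono[of b a 2] nonneg sq by simp
    moreover have "2 * b\<^sup>2 \<le> 1 - (b + a) + 2 * sqrt 2 * b * a"
      using False sq nonneg by (intro sq_le_of_sum_sq_eq_one) simp_all
    ultimately show "min (1 - u) u \<le> 1/2 * (1 - (a + b) + 2 * sqrt 2 * a * b)"
      using sq by (simp add: ac_simps)
  qed
qed

lemma integrable_continuous_comp_mult:
  fixes f :: "real \<Rightarrow> real"
  assumes f: "continuous_on {0..1} f"
    and Q: "Q \<in> borel_measurable M" "\<And>x. x \<in> space M \<Longrightarrow> Q x \<in> {0..1}"
    and p: "integrable M p"
  shows "integrable M (\<lambda>x. f (Q x) * p x)"
proof -
  have "bounded (f ` {0..1})"
    using compact_imp_bounded[OF compact_continuous_image[OF f compact_Icc]] .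
  then obtain B where B: "\<And>u. u \<in> {0..1} \<Longrightarrow> \<bar>f u\<bar> \<le> B"
    unfolding bounded_real by fast
  have "Q \<in> M \<rightarrow>\<^sub>M restrict_space borel {0..1}"
    using Q by (intro measurable_restrict_space2) auto
  then have "(\<lambda>x. f (Q x)) \<in> borel_measurable M"
    using borel_measurable_continuous_on_restrict[OF f] by (rule measurable_compose)
  have "integrable M (\<lambda>x. B * p x)" using p by simp
  then show ?thesis
  proof (rule Bochner_Integration.integrable_bound)
    show "(\<lambda>x. f (Q x) * p x) \<in> borel_measurable M"
      using \<open>(\<lambda>x. f (Q x)) \<in> borel_measurable M\<close> borel_measurable_integrable[OF p] by simp
    show "AE x in M. norm (f (Q x) * p x) \<le> norm (B * p x)"
    proof (rule AE_I2)
      fix x assume "x \<in> space M"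
      then have "\<bar>f (Q x)\<bar> \<le> \<bar>B\<bar>" using B Q(2) by force
      then show "norm (f (Q x) * p x) \<le> norm (B * p x)"
        by (simp add: abs_mult mult_right_mono)
    qed
  qed
qed

theorem mainTheorem11:
  fixes M :: "'a measure" and p P1 P2 :: "'a \<Rightarrow> real"
  assumes p_meas: "p \<in> borel_measurable M"
    and p_nonneg: "\<And>x. x \<in> space M \<Longrightarrow> p x \<ge> 0"
    and p_int: "integrable M p"
    and p_one: "(\<integral>x. p x \<partial>M) = 1"
    and P1_meas: "P1 \<in> borel_measurable M"
    and P2_meas: "P2 \<in> borel_measurable M"
    and P1_nonneg: "\<And>x. x \<in> space M \<Longrightarrow> P1 x \<ge> 0"
    and P2_nonneg: "\<And>x. x \<in> space M \<Longrightarrow> P2 x \<ge> 0"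
    and P_sum: "\<And>x. x \<in> space M \<Longrightarrow> P1 x + P2 x = 1"
  shows "Pe M p P1 P2 \<le> 1/2 * (1 - 4 / sqrt 2 * M_N2G M p P2)"
proof -
  have P2_unit: "P2 x \<in> {0..1}" and P1_eq: "P1 x = 1 - P2 x" if "x \<in> space M" for x
    using P_sum[OF that] P1_nonneg[OF that] P2_nonneg[OF that] by auto
  have int_closed: "integrable M (\<lambda>x. fN2G_star_closed (P2 x) * p x)"
    using continuous_on_fN2G_star_closed P2_meas P2_unit p_int
    by (rule integrable_continuous_comp_mult)
  have int_min: "integrable M (\<lambda>x. min (1 - P2 x) (P2 x) * p x)"
    using _ P2_meas P2_unit p_int
    by (rule integrable_continuous_comp_mult) (intro continuous_intros)
  have M_N2G_closed: "M_N2G M p P2 = (\<integral>x. fN2G_star_closed (P2 x) * p x \<partial>M)"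
    unfolding M_N2G_def E_X_def using P2_unit
    by (intro Bochner_Integration.integral_cong) (auto simp: fN2G_star_eq_closed)
  have "Pe M p P1 P2 = (\<integral>x. min (1 - P2 x) (P2 x) * p x \<partial>M)"
    unfolding Pe_def E_X_def using P1_eq by (intro Bochner_Integration.integral_cong) auto
  also have "\<dots> \<le> (\<integral>x. 1/2 * p x - 2 / sqrt 2 * (fN2G_star_closed (P2 x) * p x) \<partial>M)"
  proof (intro integral_mono int_min)
    show "integrable M (\<lambda>x. 1/2 * p x - 2 / sqrt 2 * (fN2G_star_closed (P2 x) * p x))"
      using p_int int_closed by simp
    fix x assume x: "x \<in> space M"
    have "min (1 - P2 x) (P2 x) * p x
        \<le> 1/2 * (1 - 4 / sqrt 2 * fN2G_star_closed (P2 x)) * p x"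
      using min_le_fN2G_star_closed_bound P2_unit[OF x] p_nonneg[OF x]
      by (intro mult_right_mono) auto
    then show "min (1 - P2 x) (P2 x) * p x
        \<le> 1/2 * p x - 2 / sqrt 2 * (fN2G_star_closed (P2 x) * p x)"
      by (simp add: algebra_simps)
  qed
  also have "\<dots> = 1/2 * (\<integral>x. p x \<partial>M) - 2 / sqrt 2 * M_N2G M p P2"
    using p_int int_closed unfolding M_N2G_closed
    by (subst Bochner_Integration.integral_diff) auto
  also have "\<dots> = 1/2 * (1 - 4 / sqrt 2 * M_N2G M p P2)"
    by (simp add: p_one)
  finally show ?thesis .
qed

end
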